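(* Let $M$ be a monoid with zero and let $I$ be an rf-compatible ideal of $M$ such that $N=(M\setminus I)\cup\{0\}$ is a submonoid of $M$. Then $M$ is residually finite if and only if $N$ is residually finite.
   Context: An ideal $I$ of a monoid $M$ is rf-compatible with $M$ if for any two distinct $s,t\in I$ there is a congruence $\rho$ of finite index on the semigroup $I$ with $s/\rho\neq t/\rho$ such that $\rho\cup\Delta_M$ is a congruence on $M$, where $\Delta_M=\{(x,x):x\in M\}$. A monoid is residually finite if distinct elements are separated by homomorphisms to finite monoids. *)

theory Defs
  imports "HOL-Algebra.Group"
begin

definition monoid_with_zero :: "('a, 'b) monoid_scheme \<Rightarrow> 'a \<Rightarrow> bool" where
  "monoid_with_zero G z \<longleftrightarrow> monoid G \<and> z \<in> carrier G \<and>
     (\<forall>x\<in>carrier G. z \<otimes>\<^bsub>G\<^esub> x = z \<and> x \<otimes>\<^bsub>G\<^esub> z = z)"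

definition monoid_ideal :: "('a, 'b) monoid_scheme \<Rightarrow> 'a set \<Rightarrow> bool" where
  "monoid_ideal G I \<longleftrightarrow> I \<noteq> {} \<and> I \<subseteq> carrier G \<and>
     (\<forall>x\<in>carrier G. \<forall>s\<in>I. x \<otimes>\<^bsub>G\<^esub> s \<in> I \<and> s \<otimes>\<^bsub>G\<^esub> x \<in> I)"

definition semigroup_congruence :: "('a, 'b) monoid_scheme \<Rightarrow> 'a set \<Rightarrow> 'a rel \<Rightarrow> bool" where
  "semigroup_congruence G S \<rho> \<longleftrightarrow> equiv S \<rho> \<and>
     (\<forall>(a, b)\<in>\<rho>. \<forall>c\<in>S. (c \<otimes>\<^bsub>G\<^esub> a, c \<otimes>\<^bsub>G\<^esub> b) \<in> \<rho> \<and> (a \<otimes>\<^bsub>G\<^esub> c, b \<otimes>\<^bsub>G\<^esub> c) \<in> \<rho>)"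

definition rf_compatible :: "('a, 'b) monoid_scheme \<Rightarrow> 'a set \<Rightarrow> bool" where
  "rf_compatible G I \<longleftrightarrow>
     (\<forall>s\<in>I. \<forall>t\<in>I. s \<noteq> t \<longrightarrow>
        (\<exists>\<rho>. semigroup_congruence G I \<rho> \<and> finite (I // \<rho>) \<and> (s, t) \<notin> \<rho> \<and>
             semigroup_congruence G (carrier G) (\<rho> \<union> Id_on (carrier G))))"

definition monoid_hom :: "('a, 'c) monoid_scheme \<Rightarrow> ('b, 'd) monoid_scheme \<Rightarrow> ('a \<Rightarrow> 'b) set" where
  "monoid_hom G H = {h. h \<in> carrier G \<rightarrow> carrier H \<and>
     (\<forall>x\<in>carrier G. \<forall>y\<in>carrier G. h (x \<otimes>\<^bsub>G\<^esub> y) = h x \<otimes>\<^bsub>H\<^esub> h y) \<and>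
     h \<one>\<^bsub>G\<^esub> = \<one>\<^bsub>H\<^esub>}"

text \<open>Residual finiteness. Every finite monoid is isomorphic to one whose carrier is a
  set of natural numbers, so finite target monoids are taken on the type nat.\<close>
definition residually_finite :: "('a, 'b) monoid_scheme \<Rightarrow> bool" where
  "residually_finite G \<longleftrightarrow>
     (\<forall>x\<in>carrier G. \<forall>y\<in>carrier G. x \<noteq> y \<longrightarrow>
        (\<exists>(F :: nat monoid) h. monoid F \<and> finite (carrier F) \<and> h \<in> monoid_hom G F \<and> h x \<noteq> h y))"

end

theory Submission
  imports Defs
begin

(* Restricting the separating homomorphisms of a residually finite monoid to
   a subset of its carrier shows that N inherits residual finiteness from M.  Conversely assume N = (M - I) \<union> {z} is residually finite and let
   x \<noteq> y in M.
   - If x or y lies outside I, the map collapsing I to z is a homomorphism M \<rightarrow> N separating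
     x and y; compose it with a finite quotient of N separating their images.
   - If x, y \<in> I, take a finite-index congruence \<rho> on I separating them such that
     \<rho> \<union> \<Delta> is a congruence on M.  Each a \<in> M acts on the finite set I/\<rho> by left and right
     multiplication.  Record for a its two actions together with its \<rho>-class when a \<in> I
     lies outside the class of z.  This invariant takes finitely many values, is
     compatible with multiplication (the elements without recorded class form a
     multiplicatively closed set, because N is a submonoid and z is absorbing), and
     separates x from y; so it is the kernel of a homomorphism onto a finite monoid. *)

definition finitely_separable :: "('a, 'b) monoid_scheme \<Rightarrow> 'a \<Rightarrow> 'a \<Rightarrow> bool" where
  "finitely_separable G x y \<longleftrightarrow>
     (\<exists>(F :: nat monoid) h. monoid F \<and> finite (carrier F) \<and> h \<in> monoid_hom G F \<and> h x \<noteq> h y)"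

lemma residually_finite_iff_separable:
  "residually_finite G \<longleftrightarrow>
     (\<forall>x\<in>carrier G. \<forall>y\<in>carrier G. x \<noteq> y \<longrightarrow> finitely_separable G x y)"
  by (simp add: residually_finite_def finitely_separable_def)

section \<open>Finite quotients from compatible invariants\<close>

lemma finite_kernel_hom:
  fixes M :: "'a monoid" (structure) and \<psi> :: "'a \<Rightarrow> 'c"
  assumes mon: "monoid M" and fin: "finite (\<psi> ` carrier M)"
    and compat: "\<And>a a' b. a \<in> carrier M \<Longrightarrow> a' \<in> carrier M \<Longrightarrow> b \<in> carrier M \<Longrightarrow> \<psi> a = \<psi> a' \<Longrightarrow>
         \<psi> (a \<otimes> b) = \<psi> (a' \<otimes> b) \<and> \<psi> (b \<otimes> a) = \<psi> (b \<otimes> a')"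
  shows "\<exists>(F::nat monoid) h. monoid F \<and> finite (carrier F) \<and> h \<in> monoid_hom M F \<and>
           (\<forall>a\<in>carrier M. \<forall>b\<in>carrier M. h a = h b \<longleftrightarrow> \<psi> a = \<psi> b)"
proof -
  interpret monoid M by (rule mon)
  obtain code :: "'c \<Rightarrow> nat" where code: "inj_on code (\<psi> ` carrier M)"
    using finite_imp_inj_to_nat_seg[OF fin] by blast
  define h where "h a = code (\<psi> a)" for a
  have h_iff: "h a = h b \<longleftrightarrow> \<psi> a = \<psi> b" if "a \<in> carrier M" "b \<in> carrier M" for a b
    using code that unfolding h_def by (auto dest: inj_onD)
  have compat2: "\<psi> (a \<otimes> b) = \<psi> (a' \<otimes> b')"
    if "a \<in> carrier M" "a' \<in> carrier M" "b \<in> carrier M" "b' \<in> carrier M" "\<psi> a = \<psi> a'" "\<psi> b = \<psi> b'"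
    for a a' b b'
    using compat[of a a' b] compat[of b b' a'] that by simp
  define rep where "rep m = (SOME a. a \<in> carrier M \<and> h a = m)" for m
  have rep: "rep (h a) \<in> carrier M \<and> h (rep (h a)) = h a" if "a \<in> carrier M" for a
    unfolding rep_def by (rule someI[of _ a]) (use that in auto)
  define F where "F = \<lparr>carrier = h ` carrier M, mult = (\<lambda>m k. h (rep m \<otimes> rep k)), one = h \<one>\<rparr>"
  have mult: "h a \<otimes>\<^bsub>F\<^esub> h b = h (a \<otimes> b)" if "a \<in> carrier M" "b \<in> carrier M" for a b
  proof -
    have "\<psi> (rep (h a) \<otimes> rep (h b)) = \<psi> (a \<otimes> b)"
      using rep[OF that(1)] rep[OF that(2)] that h_iff compat2 by metis
    then show ?thesis unfolding F_def using h_iff rep that by simp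
  qed
  have "monoid F"
  proof (rule monoidI)
    fix x y assume "x \<in> carrier F" "y \<in> carrier F"
    then show "x \<otimes>\<^bsub>F\<^esub> y \<in> carrier F" unfolding F_def using rep by auto
  next
    show "\<one>\<^bsub>F\<^esub> \<in> carrier F" unfolding F_def by auto
  next
    fix x y w assume "x \<in> carrier F" "y \<in> carrier F" "w \<in> carrier F"
    then obtain a b c where "a \<in> carrier M" "b \<in> carrier M" "c \<in> carrier M" "x = h a" "y = h b" "w = h c"
      unfolding F_def by auto
    then show "x \<otimes>\<^bsub>F\<^esub> y \<otimes>\<^bsub>F\<^esub> w = x \<otimes>\<^bsub>F\<^esub> (y \<otimes>\<^bsub>F\<^esub> w)"
      using mult by (simp add: m_assoc)
  next
    fix x assume "x \<in> carrier F"
    then obtain a where "a \<in> carrier M" "x = h a" unfolding F_def by auto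
    then show "\<one>\<^bsub>F\<^esub> \<otimes>\<^bsub>F\<^esub> x = x" and "x \<otimes>\<^bsub>F\<^esub> \<one>\<^bsub>F\<^esub> = x"
      using mult[of \<one> a] mult[of a \<one>] by (auto simp: F_def)
  qed
  moreover have "h \<in> monoid_hom M F"
    unfolding monoid_hom_def using mult by (auto simp: F_def)
  moreover have "finite (carrier F)"
    using fin by (simp add: F_def h_def image_image[symmetric])
  ultimately show ?thesis using h_iff by blast
qed

lemma monoid_hom_restrict:
  assumes "h \<in> monoid_hom M F" and "S \<subseteq> carrier M"
  shows "h \<in> monoid_hom (M\<lparr>carrier := S\<rparr>) F"
  using assms unfolding monoid_hom_def by auto

lemma monoid_hom_comp:
  assumes "f \<in> monoid_hom M N" and "g \<in> monoid_hom N F"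
  shows "g \<circ> f \<in> monoid_hom M F"
  using assms unfolding monoid_hom_def by (auto simp: Pi_def)

lemma residually_finite_restrict:
  assumes "residually_finite M" and "S \<subseteq> carrier M"
  shows "residually_finite (M\<lparr>carrier := S\<rparr>)"
  using assms monoid_hom_restrict
  unfolding residually_finite_iff_separable finitely_separable_def by (simp add: subset_iff) blast

section \<open>Collapsing the ideal onto the zero\<close>

lemma zero_in_ideal:
  assumes "monoid_with_zero M z" and "monoid_ideal M I"
  shows "z \<in> I"
proof -
  obtain s where s: "s \<in> I" using assms(2) unfolding monoid_ideal_def by blast
  then have "z \<otimes>\<^bsub>M\<^esub> s \<in> I" and "z \<otimes>\<^bsub>M\<^esub> s = z"
    using assms unfolding monoid_ideal_def monoid_with_zero_def by auto
  then show ?thesis by simp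
qed

text \<open>Sending the ideal to z and fixing everything else is a homomorphism onto
  N = (M - I) \<union> {z}: if a factor lies in I, so does the product and both sides are z;
  otherwise the product lies in N, on which the map is the identity.\<close>
lemma collapse_ideal_hom:
  assumes zero: "monoid_with_zero M z" and ideal: "monoid_ideal M I"
    and sub: "submonoid ((carrier M - I) \<union> {z}) M"
  shows "(\<lambda>a. if a \<in> I then z else a) \<in> monoid_hom M (M\<lparr>carrier := (carrier M - I) \<union> {z}\<rparr>)"
proof -
  let ?N = "(carrier M - I) \<union> {z}"
  define \<phi> where "\<phi> a = (if a \<in> I then z else a)" for a
  interpret submonoid ?N M by (rule sub)
  have zI: "z \<in> I" using zero ideal by (rule zero_in_ideal)
  have mult: "\<phi> (a \<otimes>\<^bsub>M\<^esub> b) = \<phi> a \<otimes>\<^bsub>M\<^esub> \<phi> b" if a: "a \<in> carrier M" and b: "b \<in> carrier M" for a b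
  proof (cases "a \<in> I \<or> b \<in> I")
    case True
    then have "a \<otimes>\<^bsub>M\<^esub> b \<in> I" using ideal a b unfolding monoid_ideal_def by auto
    then show ?thesis using True a b zero unfolding monoid_with_zero_def \<phi>_def by auto
  next
    case False
    then have "a \<otimes>\<^bsub>M\<^esub> b \<in> ?N" using a b m_closed by auto
    then show ?thesis using False zI by (auto simp: \<phi>_def)
  qed
  have "\<phi> \<one>\<^bsub>M\<^esub> = \<one>\<^bsub>M\<^esub>" using one_closed zI by (auto simp: \<phi>_def)
  then have "\<phi> \<in> monoid_hom M (M\<lparr>carrier := ?N\<rparr>)"
    unfolding monoid_hom_def using mult by (auto simp: \<phi>_def)
  then show ?thesis unfolding \<phi>_def .
qed

lemma separable_outside_ideal:
  assumes zero: "monoid_with_zero M z" and ideal: "monoid_ideal M I"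
    and sub: "submonoid ((carrier M - I) \<union> {z}) M"
    and rfN: "residually_finite (M\<lparr>carrier := (carrier M - I) \<union> {z}\<rparr>)"
    and x: "x \<in> carrier M" and y: "y \<in> carrier M" and xy: "x \<noteq> y" and out: "x \<notin> I \<or> y \<notin> I"
  shows "finitely_separable M x y"
proof -
  let ?N = "(carrier M - I) \<union> {z}"
  define \<phi> where "\<phi> a = (if a \<in> I then z else a)" for a
  have \<phi>_hom: "\<phi> \<in> monoid_hom M (M\<lparr>carrier := ?N\<rparr>)"
    unfolding \<phi>_def using zero ideal sub by (rule collapse_ideal_hom)
  have zI: "z \<in> I" using zero ideal by (rule zero_in_ideal)
  have "\<phi> x \<in> carrier (M\<lparr>carrier := ?N\<rparr>)" "\<phi> y \<in> carrier (M\<lparr>carrier := ?N\<rparr>)"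
    and "\<phi> x \<noteq> \<phi> y"
    using x y xy out zI by (auto simp: \<phi>_def)
  then have "finitely_separable (M\<lparr>carrier := ?N\<rparr>) (\<phi> x) (\<phi> y)"
    using rfN unfolding residually_finite_iff_separable by blast
  then obtain F :: "nat monoid" and g where F: "monoid F" "finite (carrier F)"
      and g: "g \<in> monoid_hom (M\<lparr>carrier := ?N\<rparr>) F" "g (\<phi> x) \<noteq> g (\<phi> y)"
    unfolding finitely_separable_def by blast
  have "(g \<circ> \<phi>) x \<noteq> (g \<circ> \<phi>) y" using g(2) by simp
  then show ?thesis
    unfolding finitely_separable_def using F monoid_hom_comp[OF \<phi>_hom g(1)] by blast
qed

section \<open>Separating points of an rf-compatible ideal\<close>

locale ideal_congruence =
  fixes M :: "'a monoid" (structure) and z :: 'a and I :: "'a set" and \<rho> :: "'a rel"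
  assumes zero: "monoid_with_zero M z"
    and ideal: "monoid_ideal M I"
    and sub: "submonoid ((carrier M - I) \<union> {z}) M"
    and cong_I: "semigroup_congruence M I \<rho>"
    and cong_M: "semigroup_congruence M (carrier M) (\<rho> \<union> Id_on (carrier M))"
    and finite_index: "finite (I // \<rho>)"
begin

sublocale monoid M using zero unfolding monoid_with_zero_def by simp

lemma equiv: "equiv I \<rho>"
  using cong_I unfolding semigroup_congruence_def by simp

lemma rel_in_I: "(s, t) \<in> \<rho> \<Longrightarrow> s \<in> I \<and> t \<in> I"
  using equiv unfolding equiv_def refl_on_def by auto

lemma I_carrier: "I \<subseteq> carrier M"
  using ideal unfolding monoid_ideal_def by simp

lemma ideal_mult: "a \<in> carrier M \<Longrightarrow> s \<in> I \<Longrightarrow> a \<otimes> s \<in> I \<and> s \<otimes> a \<in> I"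
  using ideal unfolding monoid_ideal_def by simp

lemma zero_mult: "a \<in> carrier M \<Longrightarrow> z \<otimes> a = z \<and> a \<otimes> z = z"
  using zero unfolding monoid_with_zero_def by simp

lemma z_in_I: "z \<in> I"
  using zero ideal by (rule zero_in_ideal)

text \<open>Since \<rho> \<union> \<Delta> is a congruence on M, \<rho> is stable under multiplication by any
  element of M, not only by elements of I.\<close>
lemma rel_mult:
  assumes st: "(s, t) \<in> \<rho>" and a: "a \<in> carrier M"
  shows "(a \<otimes> s, a \<otimes> t) \<in> \<rho> \<and> (s \<otimes> a, t \<otimes> a) \<in> \<rho>"
proof -
  have "(a \<otimes> s, a \<otimes> t) \<in> \<rho> \<union> Id_on (carrier M) \<and> (s \<otimes> a, t \<otimes> a) \<in> \<rho> \<union> Id_on (carrier M)"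
    using cong_M a st unfolding semigroup_congruence_def by blast
  moreover have "a \<otimes> s \<in> I" "s \<otimes> a \<in> I" using rel_in_I[OF st] ideal_mult a by auto
  ultimately show ?thesis using equiv unfolding equiv_def refl_on_def by auto
qed

definition act_left :: "'a \<Rightarrow> 'a set \<Rightarrow> 'a set" where
  "act_left a = (\<lambda>C\<in>I // \<rho>. \<rho> `` ((\<lambda>s. a \<otimes> s) ` C))"

definition act_right :: "'a \<Rightarrow> 'a set \<Rightarrow> 'a set" where
  "act_right a = (\<lambda>C\<in>I // \<rho>. \<rho> `` ((\<lambda>s. s \<otimes> a) ` C))"

lemma class_image:
  assumes s: "s \<in> I" and f: "\<And>t. (s, t) \<in> \<rho> \<Longrightarrow> (f s, f t) \<in> \<rho>"
  shows "\<rho> `` (f ` (\<rho> `` {s})) = \<rho> `` {f s}"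
proof -
  have same: "\<rho> `` {f t} = \<rho> `` {f s}" if "t \<in> \<rho> `` {s}" for t
  proof -
    have "(s, t) \<in> \<rho>" using that by simp
    then show ?thesis using equiv_class_eq[OF equiv f[of t]] by simp
  qed
  have "s \<in> \<rho> `` {s}" using equiv s unfolding equiv_def refl_on_def by auto
  then show ?thesis using same by blast
qed

lemma act_class:
  assumes s: "s \<in> I" and a: "a \<in> carrier M"
  shows "act_left a (\<rho> `` {s}) = \<rho> `` {a \<otimes> s}" and "act_right a (\<rho> `` {s}) = \<rho> `` {s \<otimes> a}"
proof -
  have cls: "\<rho> `` {s} \<in> I // \<rho>" using s by (rule quotientI)
  show "act_left a (\<rho> `` {s}) = \<rho> `` {a \<otimes> s}"
    using class_image[of s "\<lambda>t. a \<otimes> t"] rel_mult s a cls by (simp add: act_left_def)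
  show "act_right a (\<rho> `` {s}) = \<rho> `` {s \<otimes> a}"
    using class_image[of s "\<lambda>t. t \<otimes> a"] rel_mult s a cls by (simp add: act_right_def)
qed

lemma act_in_quotient:
  assumes "a \<in> carrier M"
  shows "act_left a \<in> I // \<rho> \<rightarrow>\<^sub>E I // \<rho>" and "act_right a \<in> I // \<rho> \<rightarrow>\<^sub>E I // \<rho>"
proof -
  have "act_left a C \<in> I // \<rho> \<and> act_right a C \<in> I // \<rho>" if "C \<in> I // \<rho>" for C
  proof -
    obtain s where s: "s \<in> I" "C = \<rho> `` {s}" using \<open>C \<in> I // \<rho>\<close> by (elim quotientE)
    then show ?thesis using act_class[OF s(1) assms] ideal_mult[OF assms s(1)] by (auto intro: quotientI)
  qed
  then show "act_left a \<in> I // \<rho> \<rightarrow>\<^sub>E I // \<rho>" and "act_right a \<in> I // \<rho> \<rightarrow>\<^sub>E I // \<rho>"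
    by (auto simp: act_left_def act_right_def)
qed

lemma act_mult:
  assumes a: "a \<in> carrier M" and b: "b \<in> carrier M"
  shows "act_left (a \<otimes> b) = (\<lambda>C\<in>I // \<rho>. act_left a (act_left b C))"
    and "act_right (a \<otimes> b) = (\<lambda>C\<in>I // \<rho>. act_right b (act_right a C))"
proof -
  have pointwise: "act_left (a \<otimes> b) C = act_left a (act_left b C) \<and>
        act_right (a \<otimes> b) C = act_right b (act_right a C)" if "C \<in> I // \<rho>" for C
  proof -
    obtain s where s: "s \<in> I" "C = \<rho> `` {s}" using \<open>C \<in> I // \<rho>\<close> by (elim quotientE)
    then have sM: "s \<in> carrier M" using I_carrier by auto
    show ?thesis using s a b ideal_mult[OF b s(1)] ideal_mult[OF a s(1)]
      by (simp add: act_class m_assoc[OF a b sM] m_assoc[OF sM a b])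
  qed
  have "act_left (a \<otimes> b) C = (\<lambda>C\<in>I // \<rho>. act_left a (act_left b C)) C \<and>
        act_right (a \<otimes> b) C = (\<lambda>C\<in>I // \<rho>. act_right b (act_right a C)) C" for C
  proof (cases "C \<in> I // \<rho>")
    case True
    then show ?thesis using pointwise by simp
  next
    case False
    then show ?thesis by (simp add: act_left_def act_right_def)
  qed
  then show "act_left (a \<otimes> b) = (\<lambda>C\<in>I // \<rho>. act_left a (act_left b C))"
    and "act_right (a \<otimes> b) = (\<lambda>C\<in>I // \<rho>. act_right b (act_right a C))"
    by auto
qed

definition core_class :: "'a \<Rightarrow> 'a set option" where
  "core_class a = (if a \<in> I \<and> (a, z) \<notin> \<rho> then Some (\<rho> `` {a}) else None)"

lemma core_class_eq:
  assumes "(s, t) \<in> \<rho>"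
  shows "core_class s = core_class t"
proof -
  have "(s, z) \<in> \<rho> \<longleftrightarrow> (t, z) \<in> \<rho>" and "\<rho> `` {s} = \<rho> `` {t}"
    using assms equiv equiv_class_eq[OF equiv] unfolding equiv_def sym_def trans_def by metis+
  then show ?thesis using rel_in_I[OF assms] by (simp add: core_class_def)
qed

lemma core_class_Some: "core_class a = Some C \<Longrightarrow> a \<in> I \<and> C = \<rho> `` {a}"
  by (simp add: core_class_def split: if_splits)

lemma core_class_None: "s \<in> I \<Longrightarrow> core_class s = None \<Longrightarrow> (s, z) \<in> \<rho>"
  by (simp add: core_class_def split: if_splits)

text \<open>Elements without a core class form a multiplicatively closed set: outside I this
  is the submonoid property of N, on the class of z it is the absorption of z.\<close>
lemma core_class_None_mult:
  assumes a: "a \<in> carrier M" and b: "b \<in> carrier M"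
    and na: "core_class a = None" and nb: "core_class b = None"
  shows "core_class (a \<otimes> b) = None"
proof -
  interpret N: submonoid "(carrier M - I) \<union> {z}" M by (rule sub)
  have zz: "(z, z) \<in> \<rho>" using equiv z_in_I unfolding equiv_def refl_on_def by auto
  consider "(a, z) \<in> \<rho>" | "(b, z) \<in> \<rho>" | "a \<notin> I" "b \<notin> I"
    using na nb by (auto simp: core_class_def split: if_splits)
  then show ?thesis
  proof cases
    case 1
    then have "(a \<otimes> b, z) \<in> \<rho>" using rel_mult[OF 1 b] zero_mult[OF b] by simp
    then show ?thesis by (simp add: core_class_def)
  next
    case 2
    then have "(a \<otimes> b, z) \<in> \<rho>" using rel_mult[OF 2 a] zero_mult[OF a] by simp
    then show ?thesis by (simp add: core_class_def)
  next
    case 3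
    then have "a \<otimes> b \<in> (carrier M - I) \<union> {z}" using N.m_closed a b by blast
    then have "a \<otimes> b \<notin> I \<or> a \<otimes> b = z" by blast
    then show ?thesis using zz unfolding core_class_def by auto
  qed
qed

definition invariant :: "'a \<Rightarrow> 'a set option \<times> ('a set \<Rightarrow> 'a set) \<times> ('a set \<Rightarrow> 'a set)" where
  "invariant a = (core_class a, act_left a, act_right a)"

lemma invariant_finite: "finite (invariant ` carrier M)"
proof -
  let ?P = "I // \<rho> \<rightarrow>\<^sub>E I // \<rho>"
  have "core_class a \<in> insert None (Some ` (I // \<rho>))" for a
    by (auto simp: core_class_def intro: quotientI)
  then have "invariant a \<in> insert None (Some ` (I // \<rho>)) \<times> ?P \<times> ?P" if "a \<in> carrier M" for a
    using act_in_quotient[OF that] by (simp add: invariant_def)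
  then have "invariant ` carrier M \<subseteq> insert None (Some ` (I // \<rho>)) \<times> ?P \<times> ?P"
    by blast
  moreover have "finite ?P" using finite_index by (simp add: finite_PiE)
  ultimately show ?thesis using finite_index by (meson finite_SigmaI finite_imageI finite_insert finite_subset)
qed

lemma core_class_mult_compat:
  assumes a: "a \<in> carrier M" and a': "a' \<in> carrier M" and b: "b \<in> carrier M"
    and eq: "invariant a = invariant a'"
  shows "core_class (a \<otimes> b) = core_class (a' \<otimes> b) \<and> core_class (b \<otimes> a) = core_class (b \<otimes> a')"
proof (cases "b \<in> I")
  case True
  have "\<rho> `` {a \<otimes> b} = \<rho> `` {a' \<otimes> b}" and "\<rho> `` {b \<otimes> a} = \<rho> `` {b \<otimes> a'}"
    using eq act_class[OF True a] act_class[OF True a'] by (auto simp: invariant_def)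
  moreover have "a \<otimes> b \<in> I" "a' \<otimes> b \<in> I" "b \<otimes> a \<in> I" "b \<otimes> a' \<in> I"
    using ideal_mult True a a' by auto
  ultimately have "(a \<otimes> b, a' \<otimes> b) \<in> \<rho>" and "(b \<otimes> a, b \<otimes> a') \<in> \<rho>"
    using eq_equiv_class_iff[OF equiv] by simp_all
  then show ?thesis using core_class_eq by simp
next
  case bI: False
  then have nb: "core_class b = None" by (simp add: core_class_def)
  show ?thesis
  proof (cases "core_class a")
    case None
    then have "core_class a' = None" using eq by (simp add: invariant_def)
    then show ?thesis using None nb core_class_None_mult[OF a b] core_class_None_mult[OF a' b]
        core_class_None_mult[OF b a] core_class_None_mult[OF b a'] by simp
  next
    case (Some C)
    then have "core_class a' = Some C" using eq by (simp add: invariant_def)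
    then have "(a, a') \<in> \<rho>"
      using core_class_Some Some eq_equiv_class_iff[OF equiv] by metis
    then show ?thesis using rel_mult[OF _ b] core_class_eq by blast
  qed
qed

lemma invariant_mult_compat:
  assumes a: "a \<in> carrier M" and a': "a' \<in> carrier M" and b: "b \<in> carrier M"
    and eq: "invariant a = invariant a'"
  shows "invariant (a \<otimes> b) = invariant (a' \<otimes> b) \<and> invariant (b \<otimes> a) = invariant (b \<otimes> a')"
  using core_class_mult_compat[OF assms] eq
  by (simp add: invariant_def act_mult a a' b)

lemma invariant_separates:
  assumes "x \<in> I" "y \<in> I" "(x, y) \<notin> \<rho>"
  shows "invariant x \<noteq> invariant y"
proof
  assume "invariant x = invariant y"
  then have "core_class x = core_class y" by (simp add: invariant_def)
  have "(x, y) \<in> \<rho>"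
  proof (cases "core_class x")
    case None
    then have "(x, z) \<in> \<rho>" "(y, z) \<in> \<rho>"
      using core_class_None assms \<open>core_class x = core_class y\<close> by auto
    then have "\<rho> `` {x} = \<rho> `` {y}" using equiv_class_eq[OF equiv] by simp
    then show ?thesis using eq_equiv_class_iff[OF equiv assms(1,2)] by simp
  next
    case (Some C)
    then have "\<rho> `` {x} = \<rho> `` {y}"
      using core_class_Some[of x C] core_class_Some[of y C] \<open>core_class x = core_class y\<close> by simp
    then show ?thesis using eq_equiv_class_iff[OF equiv assms(1,2)] by simp
  qed
  with assms(3) show False by contradiction
qed

lemma separable_in_ideal:
  assumes "x \<in> I" "y \<in> I" "(x, y) \<notin> \<rho>"
  shows "finitely_separable M x y"
proof -
  obtain F :: "nat monoid" and h where "monoid F" "finite (carrier F)" "h \<in> monoid_hom M F"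
      and h: "\<forall>a\<in>carrier M. \<forall>b\<in>carrier M. h a = h b \<longleftrightarrow> invariant a = invariant b"
    using finite_kernel_hom[OF monoid_axioms invariant_finite invariant_mult_compat] by blast
  moreover have "h x \<noteq> h y" using h invariant_separates[OF assms] assms I_carrier by auto
  ultimately show ?thesis unfolding finitely_separable_def by blast
qed

end

theorem mainTheorem10:
  fixes M :: "'a monoid" and z :: 'a and I :: "'a set"
  assumes "monoid_with_zero M z"
    and "monoid_ideal M I"
    and "rf_compatible M I"
    and "submonoid ((carrier M - I) \<union> {z}) M"
  shows "residually_finite M \<longleftrightarrow> residually_finite (M\<lparr>carrier := (carrier M - I) \<union> {z}\<rparr>)"
proof
  assume "residually_finite M"
  then show "residually_finite (M\<lparr>carrier := (carrier M - I) \<union> {z}\<rparr>)"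
    by (rule residually_finite_restrict) (use assms(1) in \<open>auto simp: monoid_with_zero_def\<close>)
next
  assume rfN: "residually_finite (M\<lparr>carrier := (carrier M - I) \<union> {z}\<rparr>)"
  show "residually_finite M"
    unfolding residually_finite_iff_separable
  proof (intro ballI impI)
    fix x y assume x: "x \<in> carrier M" and y: "y \<in> carrier M" and xy: "x \<noteq> y"
    show "finitely_separable M x y"
    proof (cases "x \<in> I \<and> y \<in> I")
      case True
      then obtain \<rho> where "semigroup_congruence M I \<rho>" "finite (I // \<rho>)" "(x, y) \<notin> \<rho>"
          "semigroup_congruence M (carrier M) (\<rho> \<union> Id_on (carrier M))"
        using assms(3) xy unfolding rf_compatible_def by blast
      then interpret ideal_congruence M z I \<rho>
        using assms by (simp add: ideal_congruence_def)
      show ?thesis using True \<open>(x, y) \<notin> \<rho>\<close> by (auto intro: separable_in_ideal)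
    next
      case False
      then show ?thesis by (intro separable_outside_ideal[OF assms(1,2,4) rfN x y xy]) blast
    qed
  qed
qed

end
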